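(* Let $0<p\leq1/2$ and $\ell\geq0$, and let $H$ be a finite bipartite graph with bipartition $X\cup Y$ such that $d_H(x,x')\leq\ell$ for all distinct $x,x'\in X$. Let $A$ be a $p$-random subset of $Y$ and let $S=|X\setminus N_H(A)|$. Then for all $r\geq0$, \[ \mathbb{P}\big(S-\mathbb{E}[S]\geq r\big)\leq\exp\left(-\frac{r^2}{4p\,(e_H(X,Y)+\ell|X|^2)}\right). \]
   Context: A $p$-random subset includes each element independently with probability $p$. $d_H(x,x')=|N_H(x)\cap N_H(x')|$ is the codegree, $N_H(A)=\bigcup_{a\in A}N_H(a)$, and $e_H(X,Y)$ is the number of edges of $H$ between $X$ and $Y$. *)

theory Defs
  imports "HOL-Probability.Probability"
begin

text \<open>A finite bipartite graph H with parts X and Y is given by an edge set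
  E \<subseteq> X \<times> Y (pair (x,y) = edge between x \<in> X and y \<in> Y).\<close>

definition nbhd :: "('a \<times> 'a) set \<Rightarrow> 'a \<Rightarrow> 'a set" where
  "nbhd E x = {y. (x, y) \<in> E}"

definition codegree :: "('a \<times> 'a) set \<Rightarrow> 'a \<Rightarrow> 'a \<Rightarrow> nat" where
  "codegree E x x' = card (nbhd E x \<inter> nbhd E x')"

definition nbhd_set :: "('a \<times> 'a) set \<Rightarrow> 'a set \<Rightarrow> 'a set" where
  "nbhd_set E A = {x. \<exists>a\<in>A. (x, a) \<in> E}"

definition random_subset :: "'a set \<Rightarrow> real \<Rightarrow> 'a set pmf" where
  "random_subset Y p = map_pmf (\<lambda>f. {y\<in>Y. f y}) (Pi_pmf Y False (\<lambda>_. bernoulli_pmf p))"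

end

theory Submission
  imports Defs
begin

text \<open>
  Expose the elements of Y one at a time. Adding y to A can only decrease S(A) = |X - N(A)|,
  and by at most deg(y), so averaging out the coin of y moves the conditional expectation of S
  by a centred two-point variable with values p d and -(1 - p) d, where 0 \<le> d \<le> deg(y); its
  exponential moment is at most exp(p t^2 deg(y)^2 / 2). Multiplying these bounds gives
  E exp(t (S - E S)) \<le> exp(p t^2 V / 2) with V the sum of deg(y)^2 over Y, and double counting
  shows that V is the sum of d(x,x') over all pairs in X, hence V \<le> e(X,Y) + l |X|^2 =: D.
  Chernoff's bound with t = r / (p D) then yields exp(-r^2 / (2 p D)), a factor 2 better in the
  exponent than claimed.
\<close>

definition subset_weight :: "'a set \<Rightarrow> real \<Rightarrow> 'a set \<Rightarrow> real" where
  "subset_weight Y p A = p ^ card A * (1 - p) ^ card (Y - A)"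

definition subset_expectation :: "'a set \<Rightarrow> real \<Rightarrow> ('a set \<Rightarrow> real) \<Rightarrow> real" where
  "subset_expectation Y p g = (\<Sum>A\<in>Pow Y. subset_weight Y p A * g A)"

lemma set_pmf_random_subset: "set_pmf (random_subset Y p) \<subseteq> Pow Y"
  unfolding random_subset_def by auto

lemma finite_set_pmf_random_subset: "finite Y \<Longrightarrow> finite (set_pmf (random_subset Y p))"
  using set_pmf_random_subset by (rule finite_subset) simp

lemma pmf_random_subset:
  assumes "finite Y" "A \<subseteq> Y" "0 \<le> p" "p \<le> 1"
  shows "pmf (random_subset Y p) A = subset_weight Y p A"
proof -
  let ?M = "Pi_pmf Y False (\<lambda>_. bernoulli_pmf p)"
  have "(\<lambda>f. {y\<in>Y. f y}) -` {A} \<inter> set_pmf ?M = {\<lambda>x. x \<in> A} \<inter> set_pmf ?M"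
    using set_Pi_pmf_subset[OF assms(1), of False] assms(2) by (auto simp: fun_eq_iff)
  then have "pmf (random_subset Y p) A = pmf ?M (\<lambda>x. x \<in> A)"
    unfolding random_subset_def pmf_map
    by (metis (no_types) measure_Int_set_pmf measure_pmf_single)
  also have "\<dots> = (\<Prod>x\<in>Y. if x \<in> A then p else 1 - p)"
    using assms by (subst pmf_Pi') (auto intro!: prod.cong)
  also have "\<dots> = subset_weight Y p A"
    unfolding subset_weight_def using assms
    by (subst prod.If_cases) (auto simp: Int_absorb1 Diff_eq)
  finally show ?thesis .
qed

lemma expectation_random_subset:
  assumes "finite Y" "0 \<le> p" "p \<le> 1"
  shows "measure_pmf.expectation (random_subset Y p) g = subset_expectation Y p g"
proof -
  have "measure_pmf.expectation (random_subset Y p) g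
      = (\<Sum>A\<in>Pow Y. g A * pmf (random_subset Y p) A)"
    using assms set_pmf_random_subset by (intro integral_measure_pmf_real) auto
  also have "\<dots> = subset_expectation Y p g"
    unfolding subset_expectation_def using assms by (intro sum.cong) (auto simp: pmf_random_subset)
  finally show ?thesis .
qed

lemma subset_weight_insert:
  assumes "finite Y" "y \<notin> Y" "A \<subseteq> Y"
  shows "subset_weight (insert y Y) p A = (1 - p) * subset_weight Y p A"
    and "subset_weight (insert y Y) p (insert y A) = p * subset_weight Y p A"
proof -
  have "insert y Y - A = insert y (Y - A)" "insert y Y - insert y A = Y - A"
    using assms by auto
  moreover have "card (insert y A) = Suc (card A)"
    using assms finite_subset[OF assms(3)] by (subst card_insert_disjoint) auto
  ultimately show "subset_weight (insert y Y) p A = (1 - p) * subset_weight Y p A"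
    and "subset_weight (insert y Y) p (insert y A) = p * subset_weight Y p A"
    using assms unfolding subset_weight_def by simp_all
qed

lemma subset_expectation_insert:
  assumes "finite Y" "y \<notin> Y"
  shows "subset_expectation (insert y Y) p g
       = (1 - p) * subset_expectation Y p g + p * subset_expectation Y p (\<lambda>A. g (insert y A))"
proof -
  have disj: "Pow Y \<inter> insert y ` Pow Y = {}" using assms by auto
  have inj: "inj_on (insert y) (Pow Y)"
    using assms by (intro inj_onI) (metis Pow_iff insert_ident subsetD)
  have "subset_expectation (insert y Y) p g
      = (\<Sum>A\<in>Pow Y. subset_weight (insert y Y) p A * g A)
      + (\<Sum>A\<in>Pow Y. subset_weight (insert y Y) p (insert y A) * g (insert y A))"
    unfolding subset_expectation_def Pow_insert
    using assms disj by (simp add: sum.union_disjoint sum.reindex[OF inj])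
  also have "\<dots> = (1 - p) * subset_expectation Y p g + p * subset_expectation Y p (\<lambda>A. g (insert y A))"
    unfolding subset_expectation_def sum_distrib_left
    using assms by (simp add: subset_weight_insert mult.assoc)
  finally show ?thesis .
qed

lemma subset_expectation_linear:
  "subset_expectation Y p (\<lambda>A. a * g A + b * h A)
     = a * subset_expectation Y p g + b * subset_expectation Y p h"
  unfolding subset_expectation_def by (simp add: sum.distrib sum_distrib_left algebra_simps)

lemma subset_expectation_cmult:
  "subset_expectation Y p (\<lambda>A. a * g A) = a * subset_expectation Y p g"
  unfolding subset_expectation_def by (simp add: sum_distrib_left algebra_simps)

lemma subset_expectation_mono:
  assumes "0 \<le> p" "p \<le> 1" "\<And>A. A \<subseteq> Y \<Longrightarrow> g A \<le> h A"
  shows "subset_expectation Y p g \<le> subset_expectation Y p h"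
  unfolding subset_expectation_def subset_weight_def using assms
  by (intro sum_mono mult_left_mono) auto

lemma exp_neg_le_quadratic:
  fixes s :: real
  assumes "0 \<le> s"
  shows "exp (- s) \<le> 1 - s + s\<^sup>2 / 2"
proof -
  let ?g = "\<lambda>t::real. 1 - t + t\<^sup>2 / 2 - exp (- t)"
  have "?g 0 \<le> ?g s"
  proof (rule DERIV_nonneg_imp_nondecreasing[OF assms])
    fix x :: real
    have "(?g has_real_derivative (x - 1 + exp (- x))) (at x)"
      by (auto intro!: derivative_eq_intros)
    moreover have "0 \<le> x - 1 + exp (- x)"
      using exp_ge_add_one_self[of "- x"] by linarith
    ultimately show "\<exists>y. (?g has_real_derivative y) (at x) \<and> 0 \<le> y" by blast
  qed
  then show ?thesis by simp
qed

lemma centered_bernoulli_mgf_le: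
  fixes p s c :: real
  assumes "0 \<le> p" "p \<le> 1" "0 \<le> s" "s \<le> c"
  shows "(1 - p) * exp (p * s) + p * exp (- ((1 - p) * s)) \<le> exp (p * c\<^sup>2 / 2)"
proof -
  have "(1 - p) * exp (p * s) + p * exp (- ((1 - p) * s)) = exp (p * s) * (1 - p + p * exp (- s))"
    by (simp add: algebra_simps flip: exp_add)
  also have "1 - p + p * exp (- s) \<le> 1 + (- (p * s) + p * s\<^sup>2 / 2)"
    using mult_left_mono[OF exp_neg_le_quadratic[OF assms(3)] assms(1)]
    by (simp add: algebra_simps)
  also have "\<dots> \<le> exp (- (p * s) + p * s\<^sup>2 / 2)"
    by (rule exp_ge_add_one_self)
  also have "exp (p * s) * exp (- (p * s) + p * s\<^sup>2 / 2) = exp (p * s\<^sup>2 / 2)"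
    by (simp flip: exp_add)
  also have "\<dots> \<le> exp (p * c\<^sup>2 / 2)"
    using assms by (auto intro!: mult_left_mono power_mono divide_right_mono)
  finally show ?thesis by simp
qed

definition bounded_decrements :: "'a set \<Rightarrow> ('a set \<Rightarrow> real) \<Rightarrow> ('a \<Rightarrow> real) \<Rightarrow> bool" where
  "bounded_decrements Y f c \<longleftrightarrow>
     (\<forall>A y. A \<subseteq> Y \<longrightarrow> y \<in> Y - A \<longrightarrow>
        0 \<le> f A - f (insert y A) \<and> f A - f (insert y A) \<le> c y)"

lemma bounded_decrementsD:
  "bounded_decrements Y f c \<Longrightarrow> A \<subseteq> Y \<Longrightarrow> y \<in> Y - A
     \<Longrightarrow> 0 \<le> f A - f (insert y A) \<and> f A - f (insert y A) \<le> c y"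
  unfolding bounded_decrements_def by blast

lemma bounded_decrements_average:
  assumes "bounded_decrements (insert y Y) f c" "y \<notin> Y" "0 \<le> p" "p \<le> 1"
  shows "bounded_decrements Y (\<lambda>A. (1 - p) * f A + p * f (insert y A)) c"
proof -
  let ?h = "\<lambda>A. (1 - p) * f A + p * f (insert y A)"
  have "0 \<le> ?h A - ?h (insert z A) \<and> ?h A - ?h (insert z A) \<le> c z"
    if A: "A \<subseteq> Y" and z: "z \<in> Y - A" for A z
  proof -
    have "z \<noteq> y" using z assms(2) by auto
    then have d0: "0 \<le> f A - f (insert z A) \<and> f A - f (insert z A) \<le> c z"
      and d1: "0 \<le> f (insert y A) - f (insert z (insert y A))
               \<and> f (insert y A) - f (insert z (insert y A)) \<le> c z"
      using A z bounded_decrementsD[OF assms(1)] by (auto simp: subset_insertI2)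
    have "insert y (insert z A) = insert z (insert y A)" by auto
    then have "?h A - ?h (insert z A)
        = (1 - p) * (f A - f (insert z A)) + p * (f (insert y A) - f (insert z (insert y A)))"
      by (simp add: algebra_simps)
    then show ?thesis
      using d0 d1 assms(3,4) by (simp add: convex_bound_le)
  qed
  then show ?thesis unfolding bounded_decrements_def by blast
qed

lemma subset_expectation_exp_centered_le:
  assumes "finite Y" "0 \<le> p" "p \<le> 1" "0 \<le> t" "bounded_decrements Y f c"
  shows "subset_expectation Y p (\<lambda>A. exp (t * (f A - subset_expectation Y p f)))
           \<le> exp (p * t\<^sup>2 * (\<Sum>y\<in>Y. (c y)\<^sup>2) / 2)"
  using assms(1,5)
proof (induction Y arbitrary: f rule: finite_induct)
  case empty
  then show ?case by (simp add: subset_expectation_def subset_weight_def)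
next
  case (insert y Y)
  \<comment> \<open>h averages f over the coin of y: one step of the Doob martingale\<close>
  define h where "h A = (1 - p) * f A + p * f (insert y A)" for A
  define m where "m = subset_expectation Y p h"
  let ?K = "exp (p * t\<^sup>2 * (c y)\<^sup>2 / 2)"
  have m: "subset_expectation (insert y Y) p f = m"
    unfolding m_def h_def using insert.hyps by (simp add: subset_expectation_insert subset_expectation_linear)
  have step: "(1 - p) * exp (t * (f A - m)) + p * exp (t * (f (insert y A) - m))
      \<le> ?K * exp (t * (h A - m))" if A: "A \<subseteq> Y" for A
  proof -
    define d where "d = f A - f (insert y A)"
    have "0 \<le> d" "d \<le> c y"
      using bounded_decrementsD[OF insert.prems, of A y] A insert.hyps
      unfolding d_def by auto
    then have "0 \<le> t * d" "t * d \<le> t * c y"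
      using assms(4) by (simp_all add: mult_left_mono)
    then have "(1 - p) * exp (p * (t * d)) + p * exp (- ((1 - p) * (t * d))) \<le> ?K"
      using centered_bernoulli_mgf_le[of p "t * d" "t * c y"] assms(2,3)
      by (simp add: power_mult_distrib mult.assoc)
    moreover have "(1 - p) * exp (t * (f A - m)) + p * exp (t * (f (insert y A) - m))
      = ((1 - p) * exp (p * (t * d)) + p * exp (- ((1 - p) * (t * d)))) * exp (t * (h A - m))"
      unfolding d_def h_def by (simp add: algebra_simps flip: exp_add)
    ultimately show ?thesis by (simp add: mult_right_mono)
  qed
  have "subset_expectation (insert y Y) p (\<lambda>A. exp (t * (f A - subset_expectation (insert y Y) p f)))
      = subset_expectation Y p (\<lambda>A. (1 - p) * exp (t * (f A - m)) + p * exp (t * (f (insert y A) - m)))"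
    unfolding m using insert.hyps by (simp add: subset_expectation_insert subset_expectation_linear)
  also have "\<dots> \<le> ?K * subset_expectation Y p (\<lambda>A. exp (t * (h A - m)))"
    unfolding subset_expectation_cmult[symmetric]
    using assms(2,3) step by (rule subset_expectation_mono)
  also have "\<dots> \<le> ?K * exp (p * t\<^sup>2 * (\<Sum>y\<in>Y. (c y)\<^sup>2) / 2)"
    unfolding m_def h_def
    using insert.IH bounded_decrements_average[OF insert.prems insert.hyps(2) assms(2,3)]
    by (intro mult_left_mono) auto
  also have "\<dots> = exp (p * t\<^sup>2 * (\<Sum>y\<in>insert y Y. (c y)\<^sup>2) / 2)"
    using insert.hyps by (simp add: algebra_simps add_divide_distrib flip: exp_add)
  finally show ?case .
qed

lemma random_subset_upper_tail:
  assumes "finite Y" "0 < p" "p \<le> 1" "bounded_decrements Y f c"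
    and "(\<Sum>y\<in>Y. (c y)\<^sup>2) \<le> v" "0 < v" "0 < r"
  shows "measure_pmf.prob (random_subset Y p)
           {A. f A - measure_pmf.expectation (random_subset Y p) f \<ge> r}
         \<le> exp (- (r\<^sup>2 / (2 * p * v)))"
proof -
  let ?M = "random_subset Y p"
  define m where "m = measure_pmf.expectation ?M f"
  define t where "t = r / (p * v)"
  have t: "0 < t" unfolding t_def using assms by simp
  have "measure_pmf.prob ?M {A. f A - m \<ge> r}
      \<le> exp (- t * r) * measure_pmf.expectation ?M (\<lambda>A. exp (t * (f A - m)))"
    using measure_pmf.Chernoff_ineq_ge[OF t, of ?M UNIV "\<lambda>A. f A - m" r]
    using finite_set_pmf_random_subset[OF assms(1)]
    by (simp add: set_integrable_def set_lebesgue_integral_def integrable_measure_pmf_finite)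
  also have "measure_pmf.expectation ?M (\<lambda>A. exp (t * (f A - m)))
      = subset_expectation Y p (\<lambda>A. exp (t * (f A - subset_expectation Y p f)))"
    unfolding m_def using assms by (simp add: expectation_random_subset)
  also have "\<dots> \<le> exp (p * t\<^sup>2 * (\<Sum>y\<in>Y. (c y)\<^sup>2) / 2)"
    using assms t by (intro subset_expectation_exp_centered_le) auto
  also have "\<dots> \<le> exp (p * t\<^sup>2 * v / 2)"
    using assms by (auto intro!: mult_left_mono divide_right_mono)
  also have "exp (- t * r) * exp (p * t\<^sup>2 * v / 2) = exp (- (r\<^sup>2 / (2 * p * v)))"
    unfolding t_def using assms by (simp add: field_simps power2_eq_square flip: exp_add)
  finally show ?thesis unfolding m_def by simp
qed

lemma card_uncovered_bounded_decrements:
  assumes "finite X"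
  shows "bounded_decrements Y (\<lambda>A. real (card (X - nbhd_set E A)))
           (\<lambda>y. real (card {x\<in>X. (x, y) \<in> E}))"
  unfolding bounded_decrements_def
proof (intro allI impI)
  fix A y
  let ?U = "X - nbhd_set E A" and ?U' = "X - nbhd_set E (insert y A)"
  have sub: "?U' \<subseteq> ?U" and fin: "finite ?U" using assms unfolding nbhd_set_def by auto
  have "card ?U - card ?U' = card (?U - ?U')"
    using card_Diff_subset[OF finite_subset[OF sub fin] sub] by simp
  also have "\<dots> \<le> card {x\<in>X. (x, y) \<in> E}"
    using assms by (intro card_mono) (auto simp: nbhd_set_def)
  finally have "real (card ?U - card ?U') \<le> real (card {x\<in>X. (x, y) \<in> E})"
    by (rule of_nat_mono)
  moreover have "real (card ?U) - real (card ?U') = real (card ?U - card ?U')"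
    using card_mono[OF fin sub] by (rule of_nat_diff[symmetric])
  ultimately show "0 \<le> real (card ?U) - real (card ?U')
      \<and> real (card ?U) - real (card ?U') \<le> real (card {x\<in>X. (x, y) \<in> E})"
    using of_nat_0_le_iff[of "card ?U - card ?U'"] by linarith
qed

lemma sum_card_nbhd:
  assumes "finite X" "finite Y" "E \<subseteq> X \<times> Y"
  shows "(\<Sum>x\<in>X. card (nbhd E x)) = card E"
proof -
  have "Sigma X (nbhd E) = E" using assms(3) unfolding nbhd_def by auto
  moreover have "finite (nbhd E x)" for x
    using assms(2,3) unfolding nbhd_def by (auto intro: finite_subset)
  ultimately show ?thesis using assms(1) card_SigmaI[of X "nbhd E"] by simp
qed

lemma sum_degree_squares_eq_sum_codegree:
  assumes "finite X" "finite Y" "E \<subseteq> X \<times> Y"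
  shows "(\<Sum>y\<in>Y. card {x\<in>X. (x, y) \<in> E} ^ 2) = (\<Sum>x\<in>X. \<Sum>x'\<in>X. codegree E x x')"
proof -
  have degree: "card {x\<in>X. (x, y) \<in> E} = (\<Sum>x\<in>X. of_bool ((x, y) \<in> E))" for y
    using assms(1) by (simp add: Collect_conj_eq Int_commute)
  have codegree: "codegree E x x' = (\<Sum>y\<in>Y. of_bool ((x, y) \<in> E \<and> (x', y) \<in> E))" for x x'
  proof -
    have "nbhd E x \<inter> nbhd E x' = Y \<inter> {y. (x, y) \<in> E \<and> (x', y) \<in> E}"
      using assms(3) unfolding nbhd_def by blast
    then show ?thesis using assms(2) by (simp add: codegree_def)
  qed
  have "(\<Sum>y\<in>Y. card {x\<in>X. (x, y) \<in> E} ^ 2)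
      = (\<Sum>y\<in>Y. \<Sum>x\<in>X. \<Sum>x'\<in>X. of_bool ((x, y) \<in> E \<and> (x', y) \<in> E))"
    unfolding degree power2_eq_square sum_product by (simp add: of_bool_conj)
  also have "\<dots> = (\<Sum>x\<in>X. \<Sum>x'\<in>X. \<Sum>y\<in>Y. of_bool ((x, y) \<in> E \<and> (x', y) \<in> E))"
    by (subst sum.swap) (subst (2) sum.swap, rule refl)
  finally show ?thesis by (simp add: codegree)
qed

lemma sum_degree_squares_le:
  fixes l :: real
  assumes "finite X" "finite Y" "E \<subseteq> X \<times> Y" "0 \<le> l"
    and "\<And>x x'. x \<in> X \<Longrightarrow> x' \<in> X \<Longrightarrow> x \<noteq> x' \<Longrightarrow> real (codegree E x x') \<le> l"
  shows "(\<Sum>y\<in>Y. (real (card {x\<in>X. (x, y) \<in> E}))\<^sup>2)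
           \<le> real (card E) + l * (real (card X))\<^sup>2"
proof -
  have "(\<Sum>y\<in>Y. card {x\<in>X. (x, y) \<in> E} ^ 2)
      = (\<Sum>x\<in>X. codegree E x x + (\<Sum>x'\<in>X - {x}. codegree E x x'))"
    using sum_degree_squares_eq_sum_codegree[OF assms(1-3)] assms(1) by (simp add: sum.remove)
  from arg_cong[OF this, of real]
  have "(\<Sum>y\<in>Y. (real (card {x\<in>X. (x, y) \<in> E}))\<^sup>2)
      = (\<Sum>x\<in>X. real (codegree E x x) + (\<Sum>x'\<in>X - {x}. real (codegree E x x')))"
    by simp
  also have "\<dots> \<le> (\<Sum>x\<in>X. real (card (nbhd E x)) + l * real (card X))"
  proof (intro sum_mono add_mono)
    fix x assume x: "x \<in> X"
    show "real (codegree E x x) \<le> real (card (nbhd E x))" by (simp add: codegree_def)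
    have "(\<Sum>x'\<in>X - {x}. real (codegree E x x')) \<le> l * real (card (X - {x}))"
      using sum_mono[of "X - {x}" "\<lambda>x'. real (codegree E x x')" "\<lambda>_. l"] x assms(5)
      by (auto simp: mult.commute)
    also have "\<dots> \<le> l * real (card X)"
      using assms(1,4) by (intro mult_left_mono) (auto intro: card_mono)
    finally show "(\<Sum>x'\<in>X - {x}. real (codegree E x x')) \<le> l * real (card X)" .
  qed
  also have "\<dots> = real (card E) + l * (real (card X))\<^sup>2"
    using sum_card_nbhd[OF assms(1-3)] by (simp add: sum.distrib power2_eq_square flip: of_nat_sum)
  finally show ?thesis .
qed

theorem lemma3p4:
  fixes X Y :: "'a set" and E :: "('a \<times> 'a) set" and p l r :: real
  assumes "0 < p" and "p \<le> 1/2" and "l \<ge> 0"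
    and "finite X" and "finite Y" and "X \<inter> Y = {}" and "E \<subseteq> X \<times> Y"
    and "\<And>x x'. x \<in> X \<Longrightarrow> x' \<in> X \<Longrightarrow> x \<noteq> x' \<Longrightarrow> real (codegree E x x') \<le> l"
    and "r \<ge> 0"
  shows "measure_pmf.prob (random_subset Y p)
           {A. real (card (X - nbhd_set E A))
               - measure_pmf.expectation (random_subset Y p) (\<lambda>A. real (card (X - nbhd_set E A))) \<ge> r}
         \<le> exp (- (r^2 / (4 * p * (real (card E) + l * real (card X)^2))))"
proof -
  define D where "D = real (card E) + l * (real (card X))\<^sup>2"
  have "0 \<le> D" unfolding D_def using assms(3) by simp
  show ?thesis
  proof (cases "r = 0 \<or> D = 0")
    case True
    \<comment> \<open>the bound is exp 0 = 1 here, also for D = 0 since r^2 / 0 = 0\<close>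
    then show ?thesis unfolding D_def[symmetric] by (auto simp: measure_pmf.prob_le_1)
  next
    case False
    with \<open>0 \<le> D\<close> assms(9) have "0 < D" "0 < r" by auto
    have "p \<le> 1" using assms(2) by simp
    note tail = random_subset_upper_tail[OF assms(5,1) \<open>p \<le> 1\<close>
        card_uncovered_bounded_decrements[OF assms(4)] sum_degree_squares_le[OF assms(4,5,7,3,8)]
        \<open>0 < D\<close>[unfolded D_def] \<open>0 < r\<close>]
    have "exp (- (r\<^sup>2 / (2 * p * D))) \<le> exp (- (r\<^sup>2 / (4 * p * D)))"
      using assms(1) \<open>0 < D\<close> by (auto intro!: divide_left_mono)
    with tail show ?thesis unfolding D_def by (rule order_trans)
  qed
qed

end
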